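(* Let $n\geq3$ be an odd integer, and for $\rho\in[\frac12,1)$ let $W_\rho(z)=\rho z^{n-2}\frac{(z+1)(z-\rho^{-1})}{(z-1)(z+\rho)}$ and $$f(\rho)=\int_{\mathbb{C}}\frac{dx\,dy}{(1+|z|^2)^2}\,\frac{1}{(1+|W_\rho(z)|^2)^2}\left|\frac{\partial W_\rho}{\partial\rho}(z)\right|^2,\qquad z=x+iy.$$ Then there exist $C>0$ and $\rho_*\in(0,1)$ such that for all $\rho\in(\rho_*,1)$, $f(\rho)<C\left[1+\log\left(\frac{1}{1-\rho}\right)\right]$. *)

theory Defs
  imports "HOL-Analysis.Analysis"
begin

definition W :: "nat \<Rightarrow> real \<Rightarrow> complex \<Rightarrow> complex" where
  "W n \<rho> z = of_real \<rho> * z ^ (n - 2) * ((z + 1) * (z - of_real (1 / \<rho>)))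
               / ((z - 1) * (z + of_real \<rho>))"

definition dW :: "nat \<Rightarrow> real \<Rightarrow> complex \<Rightarrow> complex" where
  "dW n \<rho> z = vector_derivative (\<lambda>r. W n r z) (at \<rho>)"

definition f :: "nat \<Rightarrow> real \<Rightarrow> ennreal" where
  "f n \<rho> = (\<integral>\<^sup>+ z. ennreal (1 / (1 + (cmod z)\<^sup>2)\<^sup>2 * (1 / (1 + (cmod (W n \<rho> z))\<^sup>2)\<^sup>2)
                 * (cmod (dW n \<rho> z))\<^sup>2) \<partial>lborel)"

end

theory Submission
  imports Defs
begin

text \<open>Let s be the chordal speed |dW|/(1 + |W|^2), so that the integrand of f is
  s^2/(1 + |z|^2)^2. Since 2|W| \<le> 1 + |W|^2, writing dW as W or W^2 times an explicit
  rational factor shows that s \<lesssim> 1/max(1-\<rho>, |z+\<rho>|) near the pole -\<rho> of W,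
  s \<lesssim> 1/max(1-\<rho>, |z-1/\<rho>|) near its zero 1/\<rho>, and s is bounded elsewhere.
  For 2^-N \<approx> 1-\<rho>, the function 1/max(2^-N, d)^2 of the distance d < 1 to a point is
  dominated by a sum of N+1 dyadic indicators 4^(k+1)[d < 2^-k], each of integral 4\<pi>;
  this gives the O(log(1/(1-\<rho>))) term. The bounded part is controlled by the
  integrable density 1/(1 + |z|^2)^2.\<close>

text \<open>Half the speed of \<rho> \<mapsto> W n \<rho> z in the spherical metric 2|dw|/(1 + |w|^2).\<close>
definition chordal_speed :: "nat \<Rightarrow> real \<Rightarrow> complex \<Rightarrow> real" where
  "chordal_speed n \<rho> z = cmod (dW n \<rho> z) / (1 + (cmod (W n \<rho> z))\<^sup>2)"

lemma W_eq:
  assumes "\<rho> \<noteq> 0"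
  shows "W n \<rho> z = z^(n-2) * (z+1) * (of_real \<rho> * z - 1) / ((z-1) * (z + of_real \<rho>))"
proof -
  have "of_real \<rho> * (z - of_real (1/\<rho>)) = of_real \<rho> * z - (1::complex)"
    using assms by (simp add: algebra_simps flip: of_real_mult)
  then show ?thesis unfolding W_def by (simp add: mult.assoc mult.left_commute)
qed

lemma dW_eq:
  assumes "\<rho> > 0" "z \<noteq> 1" "z \<noteq> - of_real \<rho>"
  shows "dW n \<rho> z = z^(n-2) * (z+1) * (z^2+1) / ((z-1) * (z + of_real \<rho>)^2)"
proof -
  define c where "c = z^(n-2) * (z+1) / (z-1)"
  have nz: "z + of_real \<rho> \<noteq> 0"
    using assms(3) by (auto simp: eq_neg_iff_add_eq_0)
  have "((\<lambda>w. c * ((w * z - 1) / (z + w))) has_field_derivative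
          c * ((z * (z + of_real \<rho>) - (of_real \<rho> * z - 1)) / ((z + of_real \<rho>) * (z + of_real \<rho>)))) (at (of_real \<rho>))"
    using nz by (intro DERIV_cmult DERIV_divide) (auto intro!: derivative_eq_intros)
  moreover have "c * ((z * (z + of_real \<rho>) - (of_real \<rho> * z - 1)) / ((z + of_real \<rho>) * (z + of_real \<rho>)))
      = z^(n-2) * (z+1) * (z^2+1) / ((z-1) * (z + of_real \<rho>)^2)"
    unfolding c_def by (simp add: algebra_simps power2_eq_square)
  ultimately have "((\<lambda>r. c * ((of_real r * z - 1) / (z + of_real r))) has_vector_derivative
          z^(n-2) * (z+1) * (z^2+1) / ((z-1) * (z + of_real \<rho>)^2)) (at \<rho>)"
    using has_vector_derivative_real_field by fastforce
  then have "((\<lambda>r. W n r z) has_vector_derivative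
          z^(n-2) * (z+1) * (z^2+1) / ((z-1) * (z + of_real \<rho>)^2)) (at \<rho>)"
    by (rule has_vector_derivative_transform_within_open[where S = "{0<..}"])
      (use assms(1) in \<open>auto simp: W_eq c_def\<close>)
  then show ?thesis unfolding dW_def by (rule vector_derivative_at)
qed

lemma norm_mult_div_one_plus_sq_le_half:
  fixes V E :: "'a::real_normed_div_algebra"
  shows "norm (V * E) / (1 + (norm V)\<^sup>2) \<le> norm E / 2"
proof -
  have "2 * norm V \<le> 1 + (norm V)\<^sup>2"
    using sum_squares_ge_zero[of "norm V - 1" 0] by (simp add: power2_eq_square algebra_simps)
  then have "2 * (norm V * norm E) \<le> norm E * (1 + (norm V)\<^sup>2)"
    by (metis mult.commute mult.left_commute mult_right_mono norm_ge_zero)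
  then show ?thesis by (simp add: norm_mult divide_simps add_pos_nonneg)
qed

lemma norm_sq_mult_div_one_plus_sq_le:
  fixes V F :: "'a::real_normed_div_algebra"
  shows "norm (V\<^sup>2 * F) / (1 + (norm V)\<^sup>2) \<le> norm F"
proof -
  have "(norm V)\<^sup>2 * norm F \<le> norm F * (1 + (norm V)\<^sup>2)" by (simp add: algebra_simps)
  then show ?thesis by (simp add: norm_mult norm_power divide_simps add_pos_nonneg)
qed

lemma chordal_speed_le_log_deriv:
  assumes "\<rho> > 0" "z \<noteq> 1" "z \<noteq> - of_real \<rho>" "of_real \<rho> * z \<noteq> 1"
  shows "chordal_speed n \<rho> z
           \<le> cmod (z\<^sup>2 + 1) / (2 * cmod (of_real \<rho> * z - 1) * cmod (z + of_real \<rho>))"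
proof -
  have factor: "x * t / (a * b\<^sup>2) = (x * c / (a * b)) * (t / (c * b))"
    if "a \<noteq> 0" "b \<noteq> 0" "c \<noteq> 0" for x t a b c :: complex
    using that by (simp add: field_simps power2_eq_square)
  have "z - 1 \<noteq> 0" "z + of_real \<rho> \<noteq> 0" "of_real \<rho> * z - 1 \<noteq> 0"
    using assms(2-4) by (auto simp: eq_neg_iff_add_eq_0)
  from factor[OF this, of "z ^ (n-2) * (z + 1)" "z\<^sup>2 + 1"]
  have "dW n \<rho> z = W n \<rho> z * ((z\<^sup>2 + 1) / ((of_real \<rho> * z - 1) * (z + of_real \<rho>)))"
    using assms(1-3) by (simp add: dW_eq W_eq)
  then have "chordal_speed n \<rho> z
      \<le> cmod ((z\<^sup>2 + 1) / ((of_real \<rho> * z - 1) * (z + of_real \<rho>))) / 2"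
    unfolding chordal_speed_def by (simp only: norm_mult_div_one_plus_sq_le_half)
  then show ?thesis by (simp add: norm_mult norm_divide)
qed

lemma chordal_speed_le_sq_factor:
  assumes "\<rho> > 0" "z \<noteq> 1" "z \<noteq> - of_real \<rho>" "of_real \<rho> * z \<noteq> 1" "z \<noteq> 0" "z \<noteq> -1"
  shows "chordal_speed n \<rho> z
           \<le> cmod (z\<^sup>2 + 1) * cmod (z - 1)
               / (cmod z ^ (n-2) * cmod (z + 1) * (cmod (of_real \<rho> * z - 1))\<^sup>2)"
proof -
  have factor: "q * t / (a * b\<^sup>2) = (q * c / (a * b))\<^sup>2 * (t * a / (q * c\<^sup>2))"
    if "a \<noteq> 0" "b \<noteq> 0" "c \<noteq> 0" "q \<noteq> 0" for q t a b c :: complex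
    using that by (simp add: field_simps power2_eq_square)
  have "z - 1 \<noteq> 0" "z + of_real \<rho> \<noteq> 0" "of_real \<rho> * z - 1 \<noteq> 0" "z ^ (n-2) * (z + 1) \<noteq> 0"
    using assms(2-6) by (auto simp: eq_neg_iff_add_eq_0)
  from factor[OF this, of "z\<^sup>2 + 1"]
  have "dW n \<rho> z = (W n \<rho> z)\<^sup>2
               * ((z\<^sup>2 + 1) * (z - 1) / (z ^ (n-2) * (z + 1) * (of_real \<rho> * z - 1)\<^sup>2))"
    using assms(1-3) by (simp add: dW_eq W_eq mult.commute)
  then have "chordal_speed n \<rho> z
      \<le> cmod ((z\<^sup>2 + 1) * (z - 1) / (z ^ (n-2) * (z + 1) * (of_real \<rho> * z - 1)\<^sup>2))"
    unfolding chordal_speed_def by (simp only: norm_sq_mult_div_one_plus_sq_le)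
  then show ?thesis by (simp add: norm_mult norm_divide norm_power)
qed

lemma chordal_speed_le_norm_dW:
  assumes "\<rho> > 0" "z \<noteq> 1" "z \<noteq> - of_real \<rho>"
  shows "chordal_speed n \<rho> z
           \<le> cmod z ^ (n-2) * cmod (z + 1) * cmod (z\<^sup>2 + 1) / (cmod (z - 1) * (cmod (z + of_real \<rho>))\<^sup>2)"
proof -
  have "chordal_speed n \<rho> z \<le> cmod (dW n \<rho> z)"
    unfolding chordal_speed_def
    using divide_left_mono[of 1 "1 + (cmod (W n \<rho> z))\<^sup>2" "cmod (dW n \<rho> z)"]
    by (simp add: add_pos_nonneg)
  then show ?thesis using assms by (simp add: dW_eq norm_mult norm_divide norm_power)
qed

lemma norm_sq_plus_one_le_four:
  assumes "cmod z \<le> 3/2"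
  shows "cmod (z\<^sup>2 + 1) \<le> 4"
proof -
  have "cmod (z\<^sup>2 + 1) \<le> (cmod z)\<^sup>2 + 1" using norm_triangle_ineq[of "z\<^sup>2" 1] by (simp add: norm_power)
  moreover have "(cmod z)\<^sup>2 \<le> (3/2)\<^sup>2" using assms by (intro power_mono) auto
  ultimately show ?thesis by (simp add: power2_eq_square)
qed

lemma norm_factors_near_minus_one:
  assumes "0 < \<rho>" "cmod (z + 1) < 1/2"
  shows "1 \<le> cmod (of_real \<rho> * z - 1)" and "1/2 \<le> cmod z" and "cmod z \<le> 3/2"
    and "cmod (z\<^sup>2 + 1) \<le> 4" and "cmod (z - 1) \<le> 5/2"
proof -
  have "Re z < -1/2" using abs_Re_le_cmod[of "z + 1"] assms(2) by simp
  then show "1 \<le> cmod (of_real \<rho> * z - 1)"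
    using abs_Re_le_cmod[of "of_real \<rho> * z - 1"] mult_pos_neg[OF assms(1), of "Re z"] by simp
  have "\<bar>cmod z - 1\<bar> \<le> cmod (z + 1)" using norm_triangle_ineq3[of z "-1"] by simp
  then show "1/2 \<le> cmod z" and z_le: "cmod z \<le> 3/2" using assms(2) by linarith+
  show "cmod (z\<^sup>2 + 1) \<le> 4" using z_le by (rule norm_sq_plus_one_le_four)
  show "cmod (z - 1) \<le> 5/2"
    using norm_triangle_ineq[of "z + 1" "-2"] assms(2) by simp
qed

lemma norm_factors_near_one:
  assumes "1/2 \<le> \<rho>" "cmod (z - 1) < 1/2"
  shows "1 \<le> cmod (z + of_real \<rho>)" and "cmod z \<le> 3/2"
    and "cmod (z\<^sup>2 + 1) \<le> 4" and "cmod (z + 1) \<le> 5/2"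
proof -
  have "Re z > 1/2" using abs_Re_le_cmod[of "z - 1"] assms(2) by simp
  then show "1 \<le> cmod (z + of_real \<rho>)"
    using abs_Re_le_cmod[of "z + of_real \<rho>"] assms(1) by simp
  have "\<bar>cmod z - 1\<bar> \<le> cmod (z - 1)" using norm_triangle_ineq3[of z 1] by simp
  then show z_le: "cmod z \<le> 3/2" using assms(2) by linarith
  show "cmod (z\<^sup>2 + 1) \<le> 4" using z_le by (rule norm_sq_plus_one_le_four)
  show "cmod (z + 1) \<le> 5/2"
    using norm_triangle_ineq[of "z - 1" 2] assms(2) by (simp add: add.commute)
qed

lemma chordal_speed_le_near_minus_one:
  assumes "3/4 \<le> \<rho>" "\<rho> < 1" "cmod (z + 1) < 1/2" "z \<noteq> - of_real \<rho>"
  shows "chordal_speed n \<rho> z \<le> 10 * 2^(n-2) / max ((1-\<rho>)/2) (cmod (z + of_real \<rho>))"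
proof -
  define e d where "e = 1 - \<rho>" and "d = cmod (z + of_real \<rho>)"
  have "0 < \<rho>" using assms(1) by simp
  note bounds = norm_factors_near_minus_one[OF this assms(3)]
  have e_pos: "0 < e" using assms(2) by (simp add: e_def)
  have "(z + 1) - (z + of_real \<rho>) = of_real e" by (simp add: e_def)
  then have e_le: "e \<le> cmod (z + 1) + d"
    using norm_triangle_ineq4[of "z + 1" "z + of_real \<rho>"] e_pos by (simp add: d_def)
  show ?thesis
  proof (cases "e/2 \<le> d")
    case True
    have "chordal_speed n \<rho> z \<le> cmod (z\<^sup>2 + 1) / (2 * cmod (of_real \<rho> * z - 1) * d)"
      unfolding d_def using assms(1,3,4) bounds(1) by (intro chordal_speed_le_log_deriv) auto
    also have "\<dots> \<le> 4 / (2 * 1 * d)"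
      using bounds(1,4) True e_pos by (intro frac_le mult_right_mono) auto
    also have "\<dots> \<le> 10 / d"
      using True e_pos by (simp add: divide_simps)
    also have "\<dots> \<le> 10 * 2^(n-2) / d"
      using True e_pos by (intro divide_right_mono) auto
    finally show ?thesis using True by (simp add: d_def e_def max_def)
  next
    case False
    then have "e/2 < cmod (z + 1)" using e_le by simp
    then have "chordal_speed n \<rho> z
        \<le> cmod (z\<^sup>2 + 1) * cmod (z - 1) / (cmod z ^ (n-2) * cmod (z + 1) * (cmod (of_real \<rho> * z - 1))\<^sup>2)"
      using assms(1,3,4) bounds(1,2) e_pos by (intro chordal_speed_le_sq_factor) auto
    also have "\<dots> \<le> 4 * (5/2) / ((1/2)^(n-2) * (e/2) * 1\<^sup>2)"
      using bounds(1,2,4,5) \<open>e/2 < cmod (z + 1)\<close> e_pos by (intro frac_le mult_mono power_mono) auto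
    also have "\<dots> = 10 * 2^(n-2) / (e/2)"
      by (simp add: divide_simps)
    finally show ?thesis using False by (simp add: d_def e_def max_def)
  qed
qed

lemma chordal_speed_le_near_one:
  assumes "3/4 \<le> \<rho>" "\<rho> < 1" "cmod (z - 1) < 1/2" "z \<noteq> 1"
  shows "chordal_speed n \<rho> z \<le> 10 * 2^(n-2) / max ((1-\<rho>)/2) (cmod (z - of_real (1/\<rho>)))"
proof -
  define e d where "e = 1 - \<rho>" and "d = cmod (z - of_real (1/\<rho>))"
  have "1/2 \<le> \<rho>" using assms(1) by simp
  note bounds = norm_factors_near_one[OF this assms(3)]
  have "of_real \<rho> * z - 1 = of_real \<rho> * (z - of_real (1/\<rho>))"
    using assms(1) by (simp add: algebra_simps flip: of_real_mult)
  then have Q: "cmod (of_real \<rho> * z - 1) = \<rho> * d"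
    using assms(1) by (simp add: d_def norm_mult)
  have e_pos: "0 < e" using assms(2) by (simp add: e_def)
  have gap: "e \<le> 1/\<rho> - 1"
    using assms(1,2) sum_squares_ge_zero[of "1 - \<rho>" 0] by (simp add: e_def field_simps power2_eq_square)
  moreover have "cmod (of_real (1/\<rho> - 1)) = 1/\<rho> - 1"
    using gap e_pos by (subst norm_of_real) simp
  moreover have "(z - 1) - (z - of_real (1/\<rho>)) = of_real (1/\<rho> - 1)" by simp
  ultimately have e_le: "e \<le> cmod (z - 1) + d"
    using norm_triangle_ineq4[of "z - 1" "z - of_real (1/\<rho>)"] by (simp add: d_def)
  show ?thesis
  proof (cases "e/2 \<le> d")
    case True
    have "chordal_speed n \<rho> z
        \<le> cmod (z\<^sup>2 + 1) / (2 * cmod (of_real \<rho> * z - 1) * cmod (z + of_real \<rho>))"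
      using assms(1,4) Q bounds(1) True e_pos by (intro chordal_speed_le_log_deriv) auto
    also have "\<dots> \<le> 4 / (2 * (3/4 * d) * 1)"
      unfolding Q using bounds(1,3) True e_pos assms(1) by (intro frac_le mult_mono) auto
    also have "\<dots> \<le> 10 / d"
      using True e_pos by (simp add: divide_simps)
    also have "\<dots> \<le> 10 * 2^(n-2) / d"
      using True e_pos by (intro divide_right_mono) auto
    finally show ?thesis using True by (simp add: d_def e_def max_def)
  next
    case False
    then have "e/2 < cmod (z - 1)" using e_le by simp
    have "chordal_speed n \<rho> z
        \<le> cmod z ^ (n-2) * cmod (z + 1) * cmod (z\<^sup>2 + 1) / (cmod (z - 1) * (cmod (z + of_real \<rho>))\<^sup>2)"
      using assms(1,4) bounds(1) by (intro chordal_speed_le_norm_dW) auto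
    also have "\<dots> \<le> 2^(n-2) * (5/2) * 4 / ((e/2) * 1\<^sup>2)"
      using bounds(1-4) \<open>e/2 < cmod (z - 1)\<close> e_pos by (intro frac_le mult_mono power_mono) auto
    also have "\<dots> = 10 * 2^(n-2) / (e/2)"
      by (simp add: divide_simps)
    finally show ?thesis using False by (simp add: d_def e_def max_def)
  qed
qed

lemma norm_factors_away_from_poles:
  assumes "3/4 \<le> \<rho>" "\<rho> < 1" "1/2 \<le> cmod (z + 1)" "1/2 \<le> cmod (z - 1)"
  shows "1/8 \<le> cmod (of_real \<rho> * z - 1)" and "1/4 \<le> cmod (z + of_real \<rho>)"
    and "cmod (z\<^sup>2 + 1) \<le> 544 * (cmod (of_real \<rho> * z - 1) * cmod (z + of_real \<rho>))"
proof -
  define m Q S where "m = cmod z" and "Q = cmod (of_real \<rho> * z - 1)" and "S = cmod (z + of_real \<rho>)"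
  have norm_of_real_1_minus: "cmod (of_real (1 - \<rho>)) = 1 - \<rho>"
    using assms(2) by (subst norm_of_real) simp
  have "(z + of_real \<rho>) + of_real (1 - \<rho>) = z + 1" by simp
  then show S1: "1/4 \<le> cmod (z + of_real \<rho>)"
    using norm_triangle_ineq[of "z + of_real \<rho>" "of_real (1 - \<rho>)"] norm_of_real_1_minus assms by simp
  have S2: "m - 1 \<le> S"
    using norm_triangle_ineq4[of "z + of_real \<rho>" "of_real \<rho>"] assms(1,2) by (simp add: S_def m_def)
  have "(of_real \<rho> * z - 1) + of_real (1 - \<rho>) = of_real \<rho> * (z - 1)" by (simp add: algebra_simps)
  then have "\<rho> * cmod (z - 1) \<le> Q + (1 - \<rho>)"
    using norm_triangle_ineq[of "of_real \<rho> * z - 1" "of_real (1 - \<rho>)"] norm_of_real_1_minus assms(1,2)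
    by (simp add: Q_def norm_mult)
  moreover have "3/4 * (1/2) \<le> \<rho> * cmod (z - 1)" using assms(1,4) by (intro mult_mono) auto
  ultimately show Q1: "1/8 \<le> cmod (of_real \<rho> * z - 1)" using assms(1,2) by (simp add: Q_def)
  have Q2: "\<rho> * m - 1 \<le> Q"
    using norm_triangle_ineq[of "of_real \<rho> * z - 1" 1] assms(1) by (simp add: Q_def m_def norm_mult)
  have T: "cmod (z\<^sup>2 + 1) \<le> m\<^sup>2 + 1"
    using norm_triangle_ineq[of "z\<^sup>2" 1] by (simp add: m_def norm_power)
  show "cmod (z\<^sup>2 + 1) \<le> 544 * (cmod (of_real \<rho> * z - 1) * cmod (z + of_real \<rho>))"
  proof (cases "m < 4")
    case True
    have "m\<^sup>2 \<le> 4\<^sup>2" using True by (intro power_mono) (auto simp: m_def)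
    moreover have "1/8 * (1/4) \<le> Q * S" using Q1 S1 by (intro mult_mono) (auto simp: Q_def S_def)
    ultimately show ?thesis using T by (simp add: Q_def S_def)
  next
    case False
    have "3/4 * m \<le> \<rho> * m" using assms(1) False by (intro mult_right_mono) auto
    then have "m/2 \<le> Q" using Q2 False by linarith
    moreover have "3/4 * m \<le> S" using S2 False by linarith
    ultimately have "m/2 * (3/4 * m) \<le> Q * S" using False by (intro mult_mono) auto
    moreover have "1 \<le> m\<^sup>2" using False one_le_power[of m 2] by simp
    ultimately show ?thesis using T by (simp add: Q_def S_def power2_eq_square)
  qed
qed

lemma chordal_speed_le_away_from_poles:
  assumes "3/4 \<le> \<rho>" "\<rho> < 1" "1/2 \<le> cmod (z + 1)" "1/2 \<le> cmod (z - 1)"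
  shows "chordal_speed n \<rho> z \<le> 272"
proof -
  define Q S where "Q = cmod (of_real \<rho> * z - 1)" and "S = cmod (z + of_real \<rho>)"
  note bounds = norm_factors_away_from_poles[OF assms, folded Q_def S_def]
  have "chordal_speed n \<rho> z \<le> cmod (z\<^sup>2 + 1) / (2 * Q * S)"
    unfolding Q_def S_def using assms(1,4) bounds(1,2)
    by (intro chordal_speed_le_log_deriv) (auto simp: Q_def S_def)
  also have "\<dots> \<le> 544 * (Q * S) / (2 * Q * S)"
    using bounds(1,2,3) by (intro divide_right_mono) auto
  also have "\<dots> = 272" using bounds(1,2) by simp
  finally show ?thesis .
qed

definition dyadic_weight :: "'a::metric_space \<Rightarrow> nat \<Rightarrow> 'a \<Rightarrow> real" where
  "dyadic_weight c N x = (\<Sum>k\<le>N. 4^(k+1) * indicator (ball c (1/2^k)) x)"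

lemma dyadic_weight_nonneg: "0 \<le> dyadic_weight c N x"
  unfolding dyadic_weight_def by (intro sum_nonneg) auto

lemma borel_measurable_dyadic_weight [measurable]: "dyadic_weight c N \<in> borel_measurable borel"
  unfolding dyadic_weight_def
  by (intro borel_measurable_sum borel_measurable_times borel_measurable_const borel_measurable_indicator) auto

lemma inverse_sq_max_le_dyadic_weight:
  assumes "dist c x < 1" "0 < \<delta>" "1/2^N \<le> \<delta>"
  shows "1 / (max \<delta> (dist c x))\<^sup>2 \<le> dyadic_weight c N x"
proof -
  define d where "d = dist c x"
  have scale: "1 / (max (1/2^N) d)\<^sup>2 \<le> dyadic_weight c N x" for N
  proof (induction N)
    case 0
    then show ?case using assms(1) by (simp add: dyadic_weight_def d_def max_def)
  next
    case (Suc N)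
    have weight_mono: "dyadic_weight c N x \<le> dyadic_weight c (Suc N) x"
      unfolding dyadic_weight_def by (intro sum_mono2) auto
    show ?case
    proof (cases "d < 1/2^N")
      case True
      have "0 < max (1/2^Suc N) d" by (simp add: less_max_iff_disj)
      then have "1 / (max (1/2^Suc N) d)\<^sup>2 \<le> 1 / (1/2^Suc N)\<^sup>2"
        by (intro divide_left_mono power_mono mult_pos_pos) auto
      also have "\<dots> = 4^(N+1) * indicator (ball c (1/2^N)) x"
        using True by (simp add: d_def power_mult_distrib[symmetric] power2_eq_square)
      also have "\<dots> \<le> dyadic_weight c (Suc N) x"
        unfolding dyadic_weight_def by (rule member_le_sum) auto
      finally show ?thesis .
    next
      case False
      then have "max (1/2^Suc N) d = max (1/2^N) d"
        using divide_left_mono[of "2^N" "2^Suc N" "1::real"] by (simp add: max_def)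
      then show ?thesis using Suc.IH weight_mono by simp
    qed
  qed
  have "0 < max (1/2^N) d" by (simp add: less_max_iff_disj)
  then have "1 / (max \<delta> d)\<^sup>2 \<le> 1 / (max (1/2^N) d)\<^sup>2"
    by (intro divide_left_mono power_mono mult_pos_pos) (use assms(2,3) in auto)
  then show ?thesis using scale[of N] by (simp add: d_def)
qed

lemma sq_le_dyadic_weight:
  assumes "0 \<le> s" "s \<le> K / max \<delta> (dist c x)" "dist c x < 1" "0 < \<delta>" "1/2^N \<le> \<delta>"
  shows "s\<^sup>2 \<le> K\<^sup>2 * dyadic_weight c N x"
proof -
  have "s\<^sup>2 \<le> (K / max \<delta> (dist c x))\<^sup>2" using assms(2,1) by (rule power_mono)
  also have "\<dots> = K\<^sup>2 * (1 / (max \<delta> (dist c x))\<^sup>2)" by (simp add: power_divide)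
  also have "\<dots> \<le> K\<^sup>2 * dyadic_weight c N x"
    using assms(3-5) by (intro mult_left_mono inverse_sq_max_le_dyadic_weight) auto
  finally show ?thesis .
qed

lemma nn_integral_dyadic_weight:
  "(\<integral>\<^sup>+z. ennreal (dyadic_weight (c::complex) N z) \<partial>lborel) = ennreal (4 * pi * (N+1))"
proof -
  have "ennreal (dyadic_weight c N z) = (\<Sum>k\<le>N. ennreal (4^(k+1)) * indicator (ball c (1/2^k)) z)"
    for z
    unfolding dyadic_weight_def
    by (subst sum_ennreal[symmetric]) (auto simp: ennreal_mult' ennreal_indicator)
  then have "(\<integral>\<^sup>+z. ennreal (dyadic_weight c N z) \<partial>lborel)
      = (\<Sum>k\<le>N. \<integral>\<^sup>+z. ennreal (4^(k+1)) * indicator (ball c (1/2^k)) z \<partial>lborel)"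
    by (simp only:, intro nn_integral_sum)
       (auto intro!: borel_measurable_times_ennreal borel_measurable_indicator)
  also have "\<dots> = (\<Sum>k\<le>N. ennreal (4 * pi))"
  proof (intro sum.cong refl)
    fix k :: nat
    have "emeasure lborel (ball c (1/2^k)) = ennreal (pi * (1/2^k)\<^sup>2)"
      by (simp add: emeasure_ball unit_ball_vol_numeral)
    moreover have "(4::real)^(k+1) * (pi * (1/2^k)\<^sup>2) = 4 * pi"
      by (simp add: power2_eq_square field_simps flip: power_mult_distrib)
    ultimately show "(\<integral>\<^sup>+z. ennreal (4^(k+1)) * indicator (ball c (1/2^k)) z \<partial>lborel) = ennreal (4 * pi)"
      by (simp add: nn_integral_cmult_indicator flip: ennreal_mult)
  qed
  also have "\<dots> = ennreal (4 * pi * (N+1))"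
    by (simp add: ennreal_of_nat_eq_real_of_nat ennreal_mult' mult.commute)
  finally show ?thesis .
qed

lemma inverse_sq_one_plus_norm_sq_le_sum:
  fixes z :: "'a::real_normed_vector"
  assumes "norm z < 2^j"
  shows "1 / (1 + (norm z)\<^sup>2)\<^sup>2 \<le> (\<Sum>k\<le>j. 16/16^k * indicator (ball 0 (2^k)) z)"
  using assms
proof (induction j)
  case 0
  have "1 / (1 + (norm z)\<^sup>2)\<^sup>2 \<le> 1" by (simp add: divide_simps)
  then show ?case using 0 by simp
next
  case (Suc j)
  define F :: "nat \<Rightarrow> real" where "F = (\<lambda>k. 16/16^k * indicator (ball 0 (2^k)) z)"
  have sum_mono: "sum F {..j} \<le> sum F {..Suc j}"
    unfolding F_def by (intro sum_mono2) auto
  show ?case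
  proof (cases "norm z < 2^j")
    case True
    then show ?thesis using Suc.IH sum_mono unfolding F_def by linarith
  next
    case False
    define m where "m = norm z"
    have m_ge: "2^j \<le> m" using False by (simp add: m_def)
    then have m_pos: "0 < m" by (rule less_le_trans[rotated]) simp
    have "0 < 1 + m\<^sup>2" by (simp add: add_pos_nonneg)
    then have "1 / (1 + m\<^sup>2)\<^sup>2 \<le> 1 / (m\<^sup>2)\<^sup>2"
      by (intro divide_left_mono power_mono mult_pos_pos) (use m_pos in auto)
    also have "\<dots> \<le> 1 / ((2^j)\<^sup>2)\<^sup>2"
      using m_ge m_pos by (intro divide_left_mono power_mono mult_pos_pos) auto
    also have "\<dots> = F (Suc j)"
      using Suc.prems by (simp add: F_def m_def power_mult_distrib[symmetric] power2_eq_square)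
    also have "\<dots> \<le> sum F {..Suc j}"
      unfolding F_def by (rule member_le_sum) auto
    finally show ?thesis by (simp only: F_def m_def)
  qed
qed

lemma ennreal_inverse_sq_one_plus_norm_sq_le_suminf:
  fixes z :: "'a::real_normed_vector"
  shows "ennreal (1 / (1 + (norm z)\<^sup>2)\<^sup>2) \<le> (\<Sum>k. ennreal (16/16^k) * indicator (ball 0 (2^k)) z)"
proof -
  obtain j where j: "norm z < 2^j" using real_arch_pow[of 2 "norm z"] by auto
  have "ennreal (1 / (1 + (norm z)\<^sup>2)\<^sup>2) \<le> ennreal (\<Sum>k\<le>j. 16/16^k * indicator (ball 0 (2^k)) z)"
    using inverse_sq_one_plus_norm_sq_le_sum[OF j] by (rule ennreal_leI)
  also have "\<dots> = (\<Sum>k\<le>j. ennreal (16/16^k * indicator (ball 0 (2^k)) z))"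
    by (rule sum_ennreal[symmetric]) simp
  also have "\<dots> = (\<Sum>k\<le>j. ennreal (16/16^k) * indicator (ball 0 (2^k)) z)"
    by (intro sum.cong refl) (simp add: indicator_def)
  also have "\<dots> \<le> (\<Sum>k. ennreal (16/16^k) * indicator (ball 0 (2^k)) z)"
    by (rule sum_le_suminf[OF summableI]) auto
  finally show ?thesis .
qed

lemma nn_integral_inverse_sq_one_plus_norm_sq_le:
  "(\<integral>\<^sup>+z. ennreal (1 / (1 + (cmod z)\<^sup>2)\<^sup>2) \<partial>lborel) \<le> ennreal (64/3 * pi)"
proof -
  have "(\<integral>\<^sup>+z. ennreal (1 / (1 + (cmod z)\<^sup>2)\<^sup>2) \<partial>lborel)
      \<le> (\<integral>\<^sup>+z. (\<Sum>k. ennreal (16/16^k) * indicator (ball (0::complex) (2^k)) z) \<partial>lborel)"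
    using ennreal_inverse_sq_one_plus_norm_sq_le_suminf by (rule nn_integral_mono)
  also have "\<dots> = (\<Sum>k. \<integral>\<^sup>+z. ennreal (16/16^k) * indicator (ball (0::complex) (2^k)) z \<partial>lborel)"
    by (rule nn_integral_suminf)
       (auto intro!: borel_measurable_times_ennreal borel_measurable_indicator)
  also have "\<dots> = (\<Sum>k. ennreal (16 * pi * (1/4)^k))"
  proof (rule suminf_cong)
    fix k :: nat
    have "emeasure lborel (ball (0::complex) (2^k)) = ennreal (pi * (2^k)\<^sup>2)"
      by (simp add: emeasure_ball unit_ball_vol_numeral)
    moreover have "16/16^k * (pi * ((2::real)^k)\<^sup>2) = 16 * pi * (1/4)^k"
      by (simp add: power2_eq_square field_simps flip: power_mult_distrib)
    ultimately show "(\<integral>\<^sup>+z. ennreal (16/16^k) * indicator (ball (0::complex) (2^k)) z \<partial>lborel)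
        = ennreal (16 * pi * (1/4)^k)"
      by (simp add: nn_integral_cmult_indicator flip: ennreal_mult)
  qed
  also have "\<dots> = ennreal (\<Sum>k. 16 * pi * (1/4)^k)"
    by (rule suminf_ennreal2) (auto intro!: summable_mult summable_geometric)
  also have "(\<Sum>k. 16 * pi * (1/4::real)^k) = 64/3 * pi"
    using suminf_mult[OF summable_geometric[of "1/4::real"], of "16 * pi"]
    by (simp add: suminf_geometric)
  finally show ?thesis by simp
qed

lemma sq_chordal_speed_le_near_poles:
  assumes "3/4 \<le> \<rho>" "\<rho> < 1" "1/2^N \<le> (1-\<rho>)/2" "z \<noteq> 1" "z \<noteq> - of_real \<rho>"
    and "cmod (z + 1) < 1/2 \<or> cmod (z - 1) < 1/2"
  shows "(chordal_speed n \<rho> z)\<^sup>2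
    \<le> (10 * 2^(n-2))\<^sup>2 * (dyadic_weight (- of_real \<rho>) N z + dyadic_weight (of_real (1/\<rho>)) N z)"
proof -
  define s K where "s = chordal_speed n \<rho> z" and "K = (10 * 2^(n-2) :: real)"
  have "0 \<le> s" unfolding s_def chordal_speed_def by simp
  have weight_nonneg: "0 \<le> K\<^sup>2 * dyadic_weight c N z" for c
    by (simp add: dyadic_weight_nonneg)
  have near_pole: "s\<^sup>2 \<le> K\<^sup>2 * dyadic_weight c N z"
    if "s \<le> K / max ((1-\<rho>)/2) (dist c z)" "dist c z < 1" for c
    using \<open>0 \<le> s\<close> that assms(2,3) by (intro sq_le_dyadic_weight) auto
  have "s\<^sup>2 \<le> K\<^sup>2 * dyadic_weight (- of_real \<rho>) N z + K\<^sup>2 * dyadic_weight (of_real (1/\<rho>)) N z"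
    using assms(6)
  proof
    assume near: "cmod (z + 1) < 1/2"
    have dist_eq: "dist (- of_real \<rho>) z = cmod (z + of_real \<rho>)"
      by (simp add: dist_norm norm_minus_commute add.commute)
    have "cmod (of_real (\<rho> - 1)) = 1 - \<rho>" using assms(2) by (subst norm_of_real) simp
    then have "cmod (z + of_real \<rho>) \<le> cmod (z + 1) + (1 - \<rho>)"
      using norm_triangle_ineq[of "z + 1" "of_real (\<rho> - 1)"] by simp
    then have "dist (- of_real \<rho>) z < 1" using near assms(1) dist_eq by linarith
    moreover have "s \<le> K / max ((1-\<rho>)/2) (dist (- of_real \<rho>) z)"
      unfolding dist_eq s_def K_def using assms(1,2) near assms(5) by (rule chordal_speed_le_near_minus_one)
    ultimately have "s\<^sup>2 \<le> K\<^sup>2 * dyadic_weight (- of_real \<rho>) N z" by (intro near_pole)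
    then show ?thesis using weight_nonneg[of "of_real (1/\<rho>)"] by simp
  next
    assume near: "cmod (z - 1) < 1/2"
    have dist_eq: "dist (of_real (1/\<rho>)) z = cmod (z - of_real (1/\<rho>))"
      by (simp add: dist_norm norm_minus_commute)
    have "1/\<rho> - 1 \<le> 1/3" "0 \<le> 1/\<rho> - 1" using assms(1,2) by (simp_all add: field_simps)
    moreover have "cmod (of_real (1 - 1/\<rho>)) = 1/\<rho> - 1"
      using \<open>0 \<le> 1/\<rho> - 1\<close> by (subst norm_of_real) simp
    then have "cmod (z - of_real (1/\<rho>)) \<le> cmod (z - 1) + (1/\<rho> - 1)"
      using norm_triangle_ineq[of "z - 1" "of_real (1 - 1/\<rho>)"] by simp
    ultimately have "dist (of_real (1/\<rho>)) z < 1" using near dist_eq by linarith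
    moreover have "s \<le> K / max ((1-\<rho>)/2) (dist (of_real (1/\<rho>)) z)"
      unfolding dist_eq s_def K_def using assms(1,2) near assms(4) by (rule chordal_speed_le_near_one)
    ultimately have "s\<^sup>2 \<le> K\<^sup>2 * dyadic_weight (of_real (1/\<rho>)) N z" by (intro near_pole)
    then show ?thesis using weight_nonneg[of "- of_real \<rho>"] by simp
  qed
  then show ?thesis by (simp add: s_def K_def algebra_simps)
qed

lemma integrand_le_dyadic_weights:
  fixes z :: complex
  assumes "3/4 \<le> \<rho>" "\<rho> < 1" "1/2^N \<le> (1-\<rho>)/2" "z \<noteq> 1" "z \<noteq> - of_real \<rho>"
  shows "1 / (1 + (cmod z)\<^sup>2)\<^sup>2 * (1 / (1 + (cmod (W n \<rho> z))\<^sup>2)\<^sup>2) * (cmod (dW n \<rho> z))\<^sup>2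
    \<le> (10 * 2^(n-2))\<^sup>2 * dyadic_weight (- of_real \<rho>) N z
       + (10 * 2^(n-2))\<^sup>2 * dyadic_weight (of_real (1/\<rho>)) N z
       + 272\<^sup>2 * (1 / (1 + (cmod z)\<^sup>2)\<^sup>2)"
proof -
  define G s K where "G = 1 / (1 + (cmod z)\<^sup>2)\<^sup>2" and "s = chordal_speed n \<rho> z"
    and "K = (10 * 2^(n-2) :: real)"
  have "0 \<le> G" "G \<le> 1" unfolding G_def by (auto simp: divide_simps)
  have "0 \<le> s" unfolding s_def chordal_speed_def by simp
  have weight_nonneg: "0 \<le> K\<^sup>2 * dyadic_weight c N z" for c
    by (simp add: dyadic_weight_nonneg)
  have "G * s\<^sup>2 \<le> K\<^sup>2 * dyadic_weight (- of_real \<rho>) N z + K\<^sup>2 * dyadic_weight (of_real (1/\<rho>)) N z + 272\<^sup>2 * G"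
  proof (cases "cmod (z + 1) < 1/2 \<or> cmod (z - 1) < 1/2")
    case True
    have "G * s\<^sup>2 \<le> s\<^sup>2" using \<open>0 \<le> G\<close> \<open>G \<le> 1\<close> by (intro mult_left_le_one_le) auto
    also have "\<dots> \<le> K\<^sup>2 * dyadic_weight (- of_real \<rho>) N z + K\<^sup>2 * dyadic_weight (of_real (1/\<rho>)) N z"
      using sq_chordal_speed_le_near_poles[OF assms True]
      by (simp add: s_def K_def distrib_left)
    finally show ?thesis using \<open>0 \<le> G\<close> by simp
  next
    case False
    then have "s\<^sup>2 \<le> 272\<^sup>2"
      using \<open>0 \<le> s\<close> assms(1,2) by (intro power_mono) (auto simp: s_def chordal_speed_le_away_from_poles)
    then have "G * s\<^sup>2 \<le> 272\<^sup>2 * G" using \<open>0 \<le> G\<close> by (simp add: mult_left_mono mult.commute)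
    then show ?thesis using weight_nonneg[of "- of_real \<rho>"] weight_nonneg[of "of_real (1/\<rho>)"] by simp
  qed
  moreover have "1 / (1 + (cmod z)\<^sup>2)\<^sup>2 * (1 / (1 + (cmod (W n \<rho> z))\<^sup>2)\<^sup>2) * (cmod (dW n \<rho> z))\<^sup>2 = G * s\<^sup>2"
    by (simp add: G_def s_def chordal_speed_def power_divide)
  ultimately show ?thesis by (simp add: G_def K_def)
qed

lemma f_le_dyadic_bound:
  assumes "3/4 \<le> \<rho>" "\<rho> < 1" "1/2^N \<le> (1-\<rho>)/2"
  shows "f n \<rho> \<le> ennreal (8 * pi * (10 * 2^(n-2))\<^sup>2 * (N+1) + 64/3 * pi * 272\<^sup>2)"
proof -
  define K c a b :: real where "K = (10 * 2^(n-2))\<^sup>2" and "c = 272\<^sup>2"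
    and "a = 4 * pi * (N+1)" and "b = 64/3 * pi"
  have consts_nonneg: "0 \<le> K" "0 \<le> c" "0 \<le> a" "0 \<le> b" by (simp_all add: K_def c_def a_def b_def)
  define w1 w2 G where "w1 = dyadic_weight (- of_real \<rho> :: complex) N"
    and "w2 = dyadic_weight (of_real (1/\<rho>) :: complex) N"
    and "G = (\<lambda>z::complex. 1 / (1 + (cmod z)\<^sup>2)\<^sup>2)"
  have nonneg: "0 \<le> w1 z" "0 \<le> w2 z" "0 \<le> G z" for z
    by (simp_all add: w1_def w2_def G_def dyadic_weight_nonneg)
  have "AE z in lborel. z \<noteq> 1 \<and> z \<noteq> - of_real \<rho>"
    using AE_lborel_singleton[of 1] AE_lborel_singleton[of "- of_real \<rho>"] by eventually_elim auto
  then have "AE z in lborel.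
      ennreal (1 / (1 + (cmod z)\<^sup>2)\<^sup>2 * (1 / (1 + (cmod (W n \<rho> z))\<^sup>2)\<^sup>2) * (cmod (dW n \<rho> z))\<^sup>2)
      \<le> ennreal K * ennreal (w1 z) + ennreal K * ennreal (w2 z) + ennreal c * ennreal (G z)"
  proof eventually_elim
    case (elim z)
    then have "1 / (1 + (cmod z)\<^sup>2)\<^sup>2 * (1 / (1 + (cmod (W n \<rho> z))\<^sup>2)\<^sup>2) * (cmod (dW n \<rho> z))\<^sup>2
        \<le> K * w1 z + K * w2 z + c * G z"
      unfolding K_def c_def w1_def w2_def G_def using assms by (intro integrand_le_dyadic_weights) auto
    then have "ennreal (1 / (1 + (cmod z)\<^sup>2)\<^sup>2 * (1 / (1 + (cmod (W n \<rho> z))\<^sup>2)\<^sup>2) * (cmod (dW n \<rho> z))\<^sup>2)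
        \<le> ennreal (K * w1 z + K * w2 z + c * G z)"
      by (rule ennreal_leI)
    then show ?case using nonneg[of z] consts_nonneg by (simp add: ennreal_mult)
  qed
  then have "f n \<rho> \<le> (\<integral>\<^sup>+z. ennreal K * ennreal (w1 z) + ennreal K * ennreal (w2 z)
                        + ennreal c * ennreal (G z) \<partial>lborel)"
    unfolding f_def by (rule nn_integral_mono_AE)
  also have "\<dots> = ennreal K * (\<integral>\<^sup>+z. ennreal (w1 z) \<partial>lborel) + ennreal K * (\<integral>\<^sup>+z. ennreal (w2 z) \<partial>lborel)
                  + ennreal c * (\<integral>\<^sup>+z. ennreal (G z) \<partial>lborel)"
    by (simp add: w1_def w2_def G_def nn_integral_add nn_integral_cmult)
  also have "\<dots> \<le> ennreal K * ennreal a + ennreal K * ennreal a + ennreal c * ennreal b"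
    unfolding w1_def w2_def G_def a_def b_def
    by (intro add_mono mult_left_mono order.refl nn_integral_inverse_sq_one_plus_norm_sq_le)
       (simp_all add: nn_integral_dyadic_weight)
  also have "\<dots> = ennreal (K * a + K * a + c * b)"
    using consts_nonneg by (simp add: ennreal_plus[symmetric] ennreal_mult[symmetric] del: ennreal_plus)
  also have "K * a + K * a + c * b = 8 * pi * (10 * 2^(n-2))\<^sup>2 * (N+1) + 64/3 * pi * 272\<^sup>2"
    by (simp add: K_def c_def a_def b_def algebra_simps)
  finally show ?thesis .
qed

lemma exists_dyadic_scale:
  fixes e :: real
  assumes "0 < e" "e \<le> 1"
  obtains N :: nat where "1/2^N \<le> e/2" "real N + 1 \<le> 3 * (1 + ln (1/e))"
proof -
  define x where "x = log 2 (2/e)"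
  define N where "N = nat \<lceil>x\<rceil>"
  have L: "0 \<le> ln (1/e)" using assms by simp
  have "1 \<le> x" unfolding x_def using assms by (simp add: le_log_iff field_simps)
  have "2/e = 2 powr x" unfolding x_def using assms by simp
  also have "\<dots> \<le> 2 powr real N" unfolding N_def by (intro powr_mono real_nat_ceiling_ge) auto
  also have "\<dots> = 2^N" by (simp add: powr_realpow)
  finally have "1/2^N \<le> e/2" using assms by (simp add: field_simps)
  have "x = 1 + ln (1/e) / ln 2" unfolding x_def log_def using assms by (simp add: ln_div field_simps)
  also have "\<dots> \<le> 1 + ln (1/e) / (2/3)"
    using L ln2_ge_two_thirds by (intro add_left_mono divide_left_mono) auto
  finally have "x \<le> 1 + 3/2 * ln (1/e)" by simp
  moreover have "real N < x + 1" unfolding N_def using \<open>1 \<le> x\<close> by linarith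
  ultimately have "real N + 1 \<le> 3 * (1 + ln (1/e))" using L by (simp add: algebra_simps)
  with \<open>1/2^N \<le> e/2\<close> show ?thesis by (rule that)
qed

theorem lemma6p3:
  fixes n :: nat
  assumes "odd n" and "n \<ge> 3"
  shows "\<exists>C::real. C > 0 \<and> (\<exists>\<rho>s::real. 0 < \<rho>s \<and> \<rho>s < 1 \<and>
           (\<forall>\<rho>. \<rho>s < \<rho> \<and> \<rho> < 1 \<and> 1/2 \<le> \<rho> \<longrightarrow>
              f n \<rho> < ennreal (C * (1 + ln (1 / (1 - \<rho>))))))"
proof -
  define A B :: real where "A = 8 * pi * (10 * 2^(n-2))\<^sup>2" and "B = 64/3 * pi * 272\<^sup>2"
  define C where "C = 3 * A + B + 1"
  have "0 \<le> A" "0 \<le> B" by (simp_all add: A_def B_def)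
  have bound: "f n \<rho> < ennreal (C * (1 + ln (1 / (1 - \<rho>))))" if "3/4 < \<rho>" "\<rho> < 1" for \<rho>
  proof -
    define L where "L = ln (1 / (1 - \<rho>))"
    have "0 \<le> L" using that by (simp add: L_def)
    have "0 < 1 - \<rho>" "1 - \<rho> \<le> 1" using that by auto
    then obtain N where N: "1/2^N \<le> (1-\<rho>)/2" "real N + 1 \<le> 3 * (1 + L)"
      unfolding L_def by (rule exists_dyadic_scale)
    have "f n \<rho> \<le> ennreal (A * (N+1) + B)"
      unfolding A_def B_def using that N(1) by (intro f_le_dyadic_bound) auto
    also have "\<dots> < ennreal (C * (1 + L))"
    proof (rule ennreal_lessI)
      have "A * (N+1) \<le> A * (3 * (1 + L))" using N(2) \<open>0 \<le> A\<close> by (intro mult_left_mono) auto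
      moreover have "B * 1 \<le> B * (1 + L)" using \<open>0 \<le> B\<close> \<open>0 \<le> L\<close> by (intro mult_left_mono) auto
      ultimately show "A * (N+1) + B < C * (1 + L)"
        using \<open>0 \<le> L\<close> by (simp add: C_def algebra_simps)
      show "0 < C * (1 + L)" using \<open>0 \<le> A\<close> \<open>0 \<le> B\<close> \<open>0 \<le> L\<close> by (simp add: C_def)
    qed
    finally show ?thesis unfolding L_def .
  qed
  have "0 < C" using \<open>0 \<le> A\<close> \<open>0 \<le> B\<close> by (simp add: C_def)
  then show ?thesis using bound by (intro exI[of _ C] conjI exI[of _ "3/4"]) auto
qed

end
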